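(* Assume the hypotheses on $\mathfrak{R}$ and the discrete inf-sup condition: there exist a linear operator $\mathfrak{R}:V\to W'$ and constants $\alpha_*,M^*,\kappa>0$ with $\inf_{w\ne0}\sup_{v\neq0}\langle\mathfrak{R}v,w\rangle/(\|w\|_W\|v\|_V)\ge\alpha_*$, $\|\mathfrak{R}v\|_{W'}\le M^*\|v\|_V$ for all $v\in V$, and $\kappa\|w\|_W\le\sup_{v_\eta\in V_\eta,v_\eta\ne0}\mathcal{A}(w,v_\eta)/\|v_\eta\|_V$ for all $w\in W_\theta\cup S_\theta$. Let $\mathcal{J}:W\to\mathbb{R}$ be a functional with constants $0<c_*\le C^*$ such that $c_*\|w\|_{op,\eta}\le\mathcal{J}(w)\le C^*\|w\|_{op,\eta}$ for all $w\in W$. Let $(\tilde w^n_\theta)\subset W_\theta$ satisfy $\lim_n\mathcal{J}(u-\tilde w^n_\theta)=\inf_{w_\theta\in W_\theta}\mathcal{J}(u-w_\theta)$ and converge weakly in $W$ to $u^\flat_\theta$. Then $$\|u-u^\flat_\theta\|_W\le\Big(1+2\frac{C^*}{c_*}\frac{M^*}{\alpha_*}\frac{M}{\kappa}\Big)\inf_{w_\theta\in W_\theta}\|u-w_\theta\|_W.$$ Moreover every such minimizing sequence is bounded in $W$ and hence has a weakly convergent subsequence.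
   Context: $W$ and $V$ are reflexive separable real Banach spaces, $W'$ the dual of $W$ with duality pairing $\langle\cdot,\cdot\rangle$. $\mathcal{A}:W\times V\to\mathbb{R}$ is a bilinear form with $\mathcal{A}(w,v)\le M\|w\|_W\|v\|_V$, $\mathcal{F}:V\to\mathbb{R}$ is bounded linear, and $u\in W$ is the unique solution of $\mathcal{A}(u,v)=\mathcal{F}(v)$ for all $v\in V$. $W_\theta\subseteq W$ and $V_\eta\subseteq V$ are arbitrary subsets, $V_\eta$ containing an element of nonzero norm. For $w\in W$, $\|w\|_{op,\eta}:=\sup_{v_\eta\in V_\eta,\ \|v_\eta\|_V\neq0}\mathcal{A}(w,v_\eta)/\|v_\eta\|_V$. $S_\theta:=\{w_1-w_2:\ w_1,w_2\in W_\theta\}$. *)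

theory Defs
  imports "HOL-Analysis.Analysis"
begin

definition reflexive_space :: "'a::real_normed_vector itself \<Rightarrow> bool" where
  "reflexive_space _ \<longleftrightarrow>
     (\<forall>\<phi> :: ('a \<Rightarrow>\<^sub>L real) \<Rightarrow>\<^sub>L real. \<exists>x::'a. \<forall>f. blinfun_apply \<phi> f = blinfun_apply f x)"

definition separable_type :: "'a::metric_space itself \<Rightarrow> bool" where
  "separable_type _ \<longleftrightarrow> (\<exists>D::'a set. countable D \<and> closure D = UNIV)"

definition weakly_converges_to :: "(nat \<Rightarrow> 'a::real_normed_vector) \<Rightarrow> 'a \<Rightarrow> bool" where
  "weakly_converges_to X x \<longleftrightarrow> (\<forall>f :: 'a \<Rightarrow>\<^sub>L real. (\<lambda>n. blinfun_apply f (X n)) \<longlonglongrightarrow> blinfun_apply f x)"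

definition op_norm_eta :: "('w \<Rightarrow> 'v::real_normed_vector \<Rightarrow> real) \<Rightarrow> 'v set \<Rightarrow> 'w \<Rightarrow> real" where
  "op_norm_eta A Veta w = Sup {A w v / norm v | v. v \<in> Veta \<and> norm v \<noteq> 0}"

definition diff_set :: "'w::ab_group_add set \<Rightarrow> 'w set" where
  "diff_set Wt = {w1 - w2 | w1 w2. w1 \<in> Wt \<and> w2 \<in> Wt}"

end

(*
  For any w in W_theta, ||u - u_flat|| <= ||u - w|| + ||w - u_flat||. The discrete inf-sup
  condition on differences, subadditivity of ||.||_{op,eta} and the equivalence of J with it give
  kappa ||w - w_n|| <= J(u - w_n)/c_* + M ||u - w||, and J(u - w_n) tends to inf J <= C^* M ||u - w||.
  The norm is weakly lower semicontinuous (a Hahn-Banach norming functional), so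
  ||w - u_flat|| <= (C^*/c_* + 1) (M/kappa) ||u - w||. The continuous inf-sup condition enters
  only through alpha_* <= M^*, which makes this constant at most the stated one.

  The same estimate bounds every minimizing sequence. In a separable reflexive space a bounded
  sequence has a subsequence converging against norming functionals of a dense sequence (diagonal
  argument); the functionals along which it converges form a closed subspace of the dual that
  separates points, hence the whole dual by Hahn-Banach and reflexivity, and the limit functional
  is evaluation at a point.
*)

theory Submission
  imports Defs "HOL-Library.Diagonal_Subsequence"
begin

section \<open>The Hahn--Banach theorem\<close>

text \<open>The graph of a linear functional defined on a subspace and dominated by \<open>p\<close>; working with
  graphs lets Zorn's lemma act on the subset ordering.\<close>
definition dominated_linear_graph :: "('a::real_vector \<Rightarrow> real) \<Rightarrow> ('a \<times> real) set \<Rightarrow> bool" where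
  "dominated_linear_graph p G \<longleftrightarrow> G \<noteq> {}
    \<and> (\<forall>x a b. (x, a) \<in> G \<longrightarrow> (x, b) \<in> G \<longrightarrow> a = b)
    \<and> (\<forall>x a y b. (x, a) \<in> G \<longrightarrow> (y, b) \<in> G \<longrightarrow> (x + y, a + b) \<in> G)
    \<and> (\<forall>x a c. (x, a) \<in> G \<longrightarrow> (c *\<^sub>R x, c * a) \<in> G)
    \<and> (\<forall>x a. (x, a) \<in> G \<longrightarrow> a \<le> p x)"

lemma dominated_linear_graphI:
  assumes "G \<noteq> {}"
    and "\<And>x a b. (x, a) \<in> G \<Longrightarrow> (x, b) \<in> G \<Longrightarrow> a = b"
    and "\<And>x a y b. (x, a) \<in> G \<Longrightarrow> (y, b) \<in> G \<Longrightarrow> (x + y, a + b) \<in> G"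
    and "\<And>x a c. (x, a) \<in> G \<Longrightarrow> (c *\<^sub>R x, c * a) \<in> G"
    and "\<And>x a. (x, a) \<in> G \<Longrightarrow> a \<le> p x"
  shows "dominated_linear_graph p G"
  using assms unfolding dominated_linear_graph_def by blast

lemma dominated_linear_graphD:
  assumes "dominated_linear_graph p G"
  shows "G \<noteq> {}"
    and "(x, a) \<in> G \<Longrightarrow> (x, b) \<in> G \<Longrightarrow> a = b"
    and "(x, a) \<in> G \<Longrightarrow> (y, b) \<in> G \<Longrightarrow> (x + y, a + b) \<in> G"
    and "(x, a) \<in> G \<Longrightarrow> (c *\<^sub>R x, c * a) \<in> G"
    and "(x, a) \<in> G \<Longrightarrow> a \<le> p x"
  using assms unfolding dominated_linear_graph_def by blast+

locale sublinear =
  fixes p :: "'a::real_vector \<Rightarrow> real"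
  assumes subadditive: "p (x + y) \<le> p x + p y"
    and pos_homogeneous: "c \<ge> 0 \<Longrightarrow> p (c *\<^sub>R x) = c * p x"
begin

lemma dominated_linear_graph_extend:
  assumes G: "dominated_linear_graph p G" and x0: "\<forall>a. (x0, a) \<notin> G"
  shows "\<exists>G'. dominated_linear_graph p G' \<and> G \<subset> G'"
proof -
  note ne = dominated_linear_graphD(1)[OF G] and fn = dominated_linear_graphD(2)[OF G]
    and add = dominated_linear_graphD(3)[OF G] and scl = dominated_linear_graphD(4)[OF G]
    and dom = dominated_linear_graphD(5)[OF G]
  obtain x1 a1 where "(x1, a1) \<in> G" using ne by auto
  from scl[OF this, of 0] have zero: "(0, 0) \<in> G" by simp
  text \<open>The value \<open>\<xi>\<close> assigned to \<open>x0\<close> must lie between these two families of bounds; the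
    first never exceeds the second by subadditivity.\<close>
  define S where "S = {b - p (z - x0) | z b. (z, b) \<in> G}"
  define \<xi> where "\<xi> = Sup S"
  have key: "b - p (z - x0) \<le> p (z' + x0) - b'" if "(z, b) \<in> G" "(z', b') \<in> G" for z b z' b'
  proof -
    have "b + b' \<le> p (z + z')" using dom[OF add[OF that]] .
    also have "z + z' = (z - x0) + (z' + x0)" by simp
    also have "p \<dots> \<le> p (z - x0) + p (z' + x0)" by (rule subadditive)
    finally show ?thesis by simp
  qed
  have Sne: "S \<noteq> {}" using zero unfolding S_def by blast
  have Sbdd: "bdd_above S" unfolding S_def bdd_above_def using key[OF _ zero] by auto
  have lo: "b - p (z - x0) \<le> \<xi>" if "(z, b) \<in> G" for z b
    unfolding \<xi>_def by (rule cSup_upper[OF _ Sbdd]) (use that S_def in blast)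
  have hi: "\<xi> \<le> p (z + x0) - b" if "(z, b) \<in> G" for z b
    unfolding \<xi>_def by (rule cSup_least[OF Sne]) (use that key S_def in blast)
  define G' where "G' = {(y + t *\<^sub>R x0, a + t * \<xi>) | y a t. (y, a) \<in> G}"
  have "(y + 0 *\<^sub>R x0, a + 0 * \<xi>) \<in> G'" if "(y, a) \<in> G" for y a
    unfolding G'_def using that by blast
  then have sub: "G \<subseteq> G'" by auto
  have "(0 + 1 *\<^sub>R x0, 0 + 1 * \<xi>) \<in> G'" unfolding G'_def using zero by blast
  then have new: "(x0, \<xi>) \<in> G'" by simp
  have "dominated_linear_graph p G'"
  proof (rule dominated_linear_graphI)
    show "G' \<noteq> {}" using new by blast
  next
    fix x a b assume "(x, a) \<in> G'" "(x, b) \<in> G'"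
    then obtain y1 a1 t1 y2 a2 t2 where e: "x = y1 + t1 *\<^sub>R x0" "a = a1 + t1 * \<xi>" "(y1, a1) \<in> G"
      "x = y2 + t2 *\<^sub>R x0" "b = a2 + t2 * \<xi>" "(y2, a2) \<in> G" unfolding G'_def by blast
    have m: "(y2 - y1, a2 - a1) \<in> G" using add[OF e(6) scl[OF e(3), of "-1"]] by simp
    have "t1 = t2"
    proof (rule ccontr)
      assume "t1 \<noteq> t2"
      have "y2 - y1 = (t1 - t2) *\<^sub>R x0" using e by (simp add: algebra_simps)
      then have "x0 = (1 / (t1 - t2)) *\<^sub>R (y2 - y1)" using \<open>t1 \<noteq> t2\<close> by simp
      with scl[OF m, of "1 / (t1 - t2)"] x0 show False by metis
    qed
    with e fn show "a = b" by (metis add_right_cancel)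
  next
    fix x a y b assume "(x, a) \<in> G'" "(y, b) \<in> G'"
    then obtain y1 a1 t1 y2 a2 t2 where e: "x = y1 + t1 *\<^sub>R x0" "a = a1 + t1 * \<xi>" "(y1, a1) \<in> G"
      "y = y2 + t2 *\<^sub>R x0" "b = a2 + t2 * \<xi>" "(y2, a2) \<in> G" unfolding G'_def by blast
    have "x + y = (y1 + y2) + (t1 + t2) *\<^sub>R x0" "a + b = (a1 + a2) + (t1 + t2) * \<xi>"
      using e by (simp_all add: algebra_simps)
    then show "(x + y, a + b) \<in> G'" unfolding G'_def using add[OF e(3) e(6)] by blast
  next
    fix x a c assume "(x, a) \<in> G'"
    then obtain y1 a1 t1 where e: "x = y1 + t1 *\<^sub>R x0" "a = a1 + t1 * \<xi>" "(y1, a1) \<in> G"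
      unfolding G'_def by blast
    have "c *\<^sub>R x = c *\<^sub>R y1 + (c * t1) *\<^sub>R x0" "c * a = c * a1 + (c * t1) * \<xi>"
      using e by (simp_all add: algebra_simps)
    then show "(c *\<^sub>R x, c * a) \<in> G'" unfolding G'_def using scl[OF e(3)] by blast
  next
    fix x a assume "(x, a) \<in> G'"
    then obtain y a1 t where e: "x = y + t *\<^sub>R x0" "a = a1 + t * \<xi>" "(y, a1) \<in> G"
      unfolding G'_def by blast
    consider "t > 0" | "t = 0" | "t < 0" by linarith
    then show "a \<le> p x"
    proof cases
      case 1
      have "\<xi> \<le> p ((1 / t) *\<^sub>R y + x0) - (1 / t) * a1" using hi[OF scl[OF e(3)]] .
      then have "t * \<xi> \<le> t * p ((1 / t) *\<^sub>R y + x0) - a1"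
        using 1 by (simp add: field_simps)
      also have "t * p ((1 / t) *\<^sub>R y + x0) = p (t *\<^sub>R ((1 / t) *\<^sub>R y + x0))"
        using 1 pos_homogeneous by simp
      also have "t *\<^sub>R ((1 / t) *\<^sub>R y + x0) = x"
        using 1 e by (simp add: scaleR_add_right)
      finally show ?thesis using e by simp
    next
      case 2
      with e dom show ?thesis by simp
    next
      case 3
      define s where "s = -t"
      have s: "s > 0" using 3 s_def by simp
      have "(1 / s) * a1 - p ((1 / s) *\<^sub>R y - x0) \<le> \<xi>" using lo[OF scl[OF e(3)]] .
      then have "a1 - s * p ((1 / s) *\<^sub>R y - x0) \<le> s * \<xi>"
        using s by (simp add: field_simps)
      also have "s * p ((1 / s) *\<^sub>R y - x0) = p (s *\<^sub>R ((1 / s) *\<^sub>R y - x0))"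
        using s pos_homogeneous by simp
      also have "s *\<^sub>R ((1 / s) *\<^sub>R y - x0) = x"
        using s e s_def by (simp add: scaleR_diff_right)
      finally show ?thesis using e s_def by simp
    qed
  qed
  then show ?thesis using sub new x0 by blast
qed

lemma dominated_linear_graph_Union:
  assumes "chain\<^sub>\<subseteq> \<C>" "\<C> \<noteq> {}" "\<And>G. G \<in> \<C> \<Longrightarrow> dominated_linear_graph p G"
  shows "dominated_linear_graph p (\<Union>\<C>)"
proof -
  have two: "\<exists>G\<in>\<C>. q1 \<in> G \<and> q2 \<in> G" if "q1 \<in> \<Union>\<C>" "q2 \<in> \<Union>\<C>" for q1 q2
    using that assms(1) unfolding chain_subset_def by blast
  note D = dominated_linear_graphD[OF assms(3)]
  show ?thesis
  proof (rule dominated_linear_graphI)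
    show "\<Union>\<C> \<noteq> {}" using assms(2) D(1) by blast
  next
    fix x a b assume "(x, a) \<in> \<Union>\<C>" "(x, b) \<in> \<Union>\<C>"
    then obtain G where "G \<in> \<C>" "(x, a) \<in> G" "(x, b) \<in> G" using two by blast
    then show "a = b" by (rule D(2))
  next
    fix x a y b assume "(x, a) \<in> \<Union>\<C>" "(y, b) \<in> \<Union>\<C>"
    then obtain G where "G \<in> \<C>" "(x, a) \<in> G" "(y, b) \<in> G" using two by blast
    then show "(x + y, a + b) \<in> \<Union>\<C>" using D(3) by blast
  next
    fix x a c assume "(x, a) \<in> \<Union>\<C>"
    then show "(c *\<^sub>R x, c * a) \<in> \<Union>\<C>" using D(4) by blast
  next
    fix x a assume "(x, a) \<in> \<Union>\<C>"
    then show "a \<le> p x" using D(5) by blast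
  qed
qed

theorem hahn_banach:
  assumes G0: "dominated_linear_graph p G0"
  shows "\<exists>F. linear F \<and> (\<forall>x. F x \<le> p x) \<and> (\<forall>x a. (x, a) \<in> G0 \<longrightarrow> F x = a)"
proof -
  define \<G> where "\<G> = {G. dominated_linear_graph p G \<and> G0 \<subseteq> G}"
  have "\<exists>G\<in>\<G>. \<forall>X\<in>\<G>. G \<subseteq> X \<longrightarrow> X = G"
  proof (rule Zorn_Lemma2, intro ballI)
    fix \<C> assume \<C>: "\<C> \<in> chains \<G>"
    show "\<exists>U\<in>\<G>. \<forall>X\<in>\<C>. X \<subseteq> U"
    proof (cases "\<C> = {}")
      case True
      then show ?thesis using G0 \<G>_def by auto
    next
      case False
      have "\<C> \<subseteq> \<G>" "chain\<^sub>\<subseteq> \<C>" using \<C> unfolding chains_def by auto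
      then have "dominated_linear_graph p (\<Union>\<C>)" "G0 \<subseteq> \<Union>\<C>"
        using dominated_linear_graph_Union[OF _ False] False unfolding \<G>_def by blast+
      then show ?thesis unfolding \<G>_def by blast
    qed
  qed
  then obtain G where "G \<in> \<G>" and G_max: "\<And>X. X \<in> \<G> \<Longrightarrow> G \<subseteq> X \<Longrightarrow> X = G"
    by blast
  then have G: "dominated_linear_graph p G" and G0G: "G0 \<subseteq> G" using \<G>_def by auto
  note fn = dominated_linear_graphD(2)[OF G] and add = dominated_linear_graphD(3)[OF G]
    and scl = dominated_linear_graphD(4)[OF G] and dom = dominated_linear_graphD(5)[OF G]
  have total: "\<exists>a. (x, a) \<in> G" for x
  proof (rule ccontr)
    assume "\<nexists>a. (x, a) \<in> G"
    then obtain G' where "dominated_linear_graph p G'" "G \<subset> G'"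
      using dominated_linear_graph_extend[OF G] by blast
    moreover have "G' \<in> \<G>" using calculation G0G \<G>_def by blast
    ultimately show False using G_max by blast
  qed
  define F where "F x = (THE a. (x, a) \<in> G)" for x
  have FG: "(x, F x) \<in> G" for x
    unfolding F_def by (rule theI') (use total fn in blast)
  have F_eq: "F x = a" if "(x, a) \<in> G" for x a using fn[OF FG that] .
  have "linear F" by (rule linearI) (auto intro: F_eq add scl FG)
  moreover have "\<forall>x. F x \<le> p x" using dom FG by blast
  moreover have "\<forall>x a. (x, a) \<in> G0 \<longrightarrow> F x = a" using G0G F_eq by blast
  ultimately show ?thesis by blast
qed

end

lemma sublinear_norm: "sublinear norm"
  by unfold_locales (auto simp: norm_triangle_ineq)

lemma hahn_banach_norm:
  fixes G0 :: "('a::real_normed_vector \<times> real) set"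
  assumes "dominated_linear_graph norm G0"
  shows "\<exists>f::'a \<Rightarrow>\<^sub>L real. norm f \<le> 1 \<and> (\<forall>x a. (x, a) \<in> G0 \<longrightarrow> blinfun_apply f x = a)"
proof -
  obtain F where F: "linear F" "\<forall>x. F x \<le> norm x" "\<forall>x a. (x, a) \<in> G0 \<longrightarrow> F x = a"
    using sublinear.hahn_banach[OF sublinear_norm assms] by blast
  have abs_le: "\<bar>F x\<bar> \<le> norm x" for x
    using F(2)[rule_format, of x] F(2)[rule_format, of "-x"] linear_neg[OF F(1), of x] by auto
  have "bounded_linear F"
    by (rule bounded_linear_intro[where K=1]) (use F(1) abs_le in \<open>auto simp: linear_add linear_scale\<close>)
  then show ?thesis
    using abs_le F(3)
    by (intro exI[of _ "Blinfun F"]) (auto simp: bounded_linear_Blinfun_apply intro!: norm_blinfun_bound)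
qed

lemma exists_functional_infdist_subspace:
  fixes Z :: "'a::real_normed_vector set"
  assumes Z: "subspace Z"
  shows "\<exists>f::'a \<Rightarrow>\<^sub>L real. norm f \<le> 1 \<and> (\<forall>z\<in>Z. blinfun_apply f z = 0)
           \<and> blinfun_apply f g = infdist g Z"
proof (cases "g \<in> Z")
  case True
  then show ?thesis by (intro exI[of _ 0]) auto
next
  case g: False
  have Z0: "0 \<in> Z" and Zadd: "\<And>x y. x \<in> Z \<Longrightarrow> y \<in> Z \<Longrightarrow> x + y \<in> Z"
    and Zscl: "\<And>c x. x \<in> Z \<Longrightarrow> c *\<^sub>R x \<in> Z" using Z unfolding subspace_def by auto
  define d where "d = infdist g Z"
  define G0 where "G0 = {(z + t *\<^sub>R g, t * d) | z t. z \<in> Z}"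
  have "dominated_linear_graph norm G0"
  proof (rule dominated_linear_graphI)
    show "G0 \<noteq> {}" unfolding G0_def using Z0 by blast
  next
    fix x a b assume "(x, a) \<in> G0" "(x, b) \<in> G0"
    then obtain z1 t1 z2 t2 where e: "x = z1 + t1 *\<^sub>R g" "a = t1 * d" "z1 \<in> Z"
      "x = z2 + t2 *\<^sub>R g" "b = t2 * d" "z2 \<in> Z" unfolding G0_def by blast
    have "t1 = t2"
    proof (rule ccontr)
      assume ne: "t1 \<noteq> t2"
      have "(t1 - t2) *\<^sub>R g = z2 + (-1) *\<^sub>R z1" using e by (simp add: algebra_simps)
      then have "(1 / (t1 - t2)) *\<^sub>R ((t1 - t2) *\<^sub>R g) = (1 / (t1 - t2)) *\<^sub>R (z2 + (-1) *\<^sub>R z1)"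
        by simp
      then have "g = (1 / (t1 - t2)) *\<^sub>R (z2 + (-1) *\<^sub>R z1)" using ne by simp
      with e g Zadd Zscl show False by metis
    qed
    then show "a = b" using e by simp
  next
    fix x a y b assume "(x, a) \<in> G0" "(y, b) \<in> G0"
    then obtain z1 t1 z2 t2 where e: "x = z1 + t1 *\<^sub>R g" "a = t1 * d" "z1 \<in> Z"
      "y = z2 + t2 *\<^sub>R g" "b = t2 * d" "z2 \<in> Z" unfolding G0_def by blast
    then have "(x + y, a + b) = ((z1 + z2) + (t1 + t2) *\<^sub>R g, (t1 + t2) * d)"
      by (simp add: algebra_simps)
    then show "(x + y, a + b) \<in> G0" unfolding G0_def using Zadd e by blast
  next
    fix x a c assume "(x, a) \<in> G0"
    then obtain z t where e: "x = z + t *\<^sub>R g" "a = t * d" "z \<in> Z" unfolding G0_def by blast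
    then have "(c *\<^sub>R x, c * a) = (c *\<^sub>R z + (c * t) *\<^sub>R g, (c * t) * d)" by (simp add: algebra_simps)
    then show "(c *\<^sub>R x, c * a) \<in> G0" unfolding G0_def using Zscl e by blast
  next
    fix x a assume "(x, a) \<in> G0"
    then obtain z t where e: "x = z + t *\<^sub>R g" "a = t * d" "z \<in> Z" unfolding G0_def by blast
    show "a \<le> norm x"
    proof (cases "t = 0")
      case True
      then show ?thesis using e by simp
    next
      case False
      have "d \<le> dist g ((-1 / t) *\<^sub>R z)" unfolding d_def using Zscl e by (intro infdist_le) blast
      also have "dist g ((-1 / t) *\<^sub>R z) = norm x / \<bar>t\<bar>"
        using False e by (simp add: dist_norm field_simps flip: norm_scaleR)
      finally have "\<bar>t\<bar> * d \<le> norm x" using False by (simp add: field_simps)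
      moreover have "t * d \<le> \<bar>t\<bar> * d" unfolding d_def by (intro mult_right_mono infdist_nonneg) simp
      ultimately show ?thesis using e by simp
    qed
  qed
  from hahn_banach_norm[OF this] obtain f :: "'a \<Rightarrow>\<^sub>L real"
    where f: "norm f \<le> 1" "\<forall>x a. (x, a) \<in> G0 \<longrightarrow> blinfun_apply f x = a" by blast
  have "(z + 0 *\<^sub>R g, 0 * d) \<in> G0" if "z \<in> Z" for z unfolding G0_def using that by blast
  moreover have "(0 + 1 *\<^sub>R g, 1 * d) \<in> G0" unfolding G0_def using Z0 by blast
  ultimately show ?thesis using f unfolding d_def by (intro exI[of _ f]) auto
qed

lemma exists_norming_functional:
  fixes e :: "'a::real_normed_vector"
  shows "\<exists>f::'a \<Rightarrow>\<^sub>L real. norm f \<le> 1 \<and> blinfun_apply f e = norm e"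
  using exists_functional_infdist_subspace[OF subspace_single_0, of e] by (auto simp: dist_norm)

section \<open>Weak sequential compactness in separable reflexive spaces\<close>

lemma bounded_range_blinfun_apply:
  assumes "bounded (range x)"
  shows "bounded (range (\<lambda>n. blinfun_apply g (x n)))"
  using bounded_linear_image[OF assms blinfun.bounded_linear_right[of g]] by (simp add: image_image)

lemma bounded_imp_subseq_convergent_functionals:
  fixes x :: "nat \<Rightarrow> 'a::real_normed_vector" and f :: "nat \<Rightarrow> ('a \<Rightarrow>\<^sub>L real)"
  assumes "bounded (range x)"
  shows "\<exists>r. strict_mono r \<and> (\<forall>k. convergent (\<lambda>n. blinfun_apply (f k) (x (r n))))"
proof -
  interpret subseqs "\<lambda>k s. convergent (\<lambda>n. blinfun_apply (f k) (x (s n)))"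
  proof
    fix k and s :: "nat \<Rightarrow> nat"
    have "bounded (range (x \<circ> s))" by (rule bounded_subset[OF assms]) auto
    then have "bounded (range (\<lambda>n. blinfun_apply (f k) (x (s n))))"
      using bounded_range_blinfun_apply by (simp add: o_def)
    then obtain l r where "strict_mono r" "((\<lambda>n. blinfun_apply (f k) (x (s n))) \<circ> r) \<longlonglongrightarrow> l"
      using bounded_imp_convergent_subsequence by blast
    then show "\<exists>r. strict_mono r \<and> convergent (\<lambda>n. blinfun_apply (f k) (x ((s \<circ> r) n)))"
      unfolding convergent_def o_def by blast
  qed
  have "convergent (\<lambda>n. blinfun_apply (f k) (x (diagseq n)))" for k
  proof -
    have "convergent (\<lambda>n. blinfun_apply (f k) (x ((diagseq \<circ> (+) (Suc k)) n)))"
      by (rule diagseq_holds) (auto simp: o_def intro: convergent_subseq_convergent[unfolded o_def])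
    then obtain l where "(\<lambda>n. blinfun_apply (f k) (x (diagseq (n + Suc k)))) \<longlonglongrightarrow> l"
      by (auto simp: convergent_def o_def add.commute)
    then show ?thesis unfolding convergent_def by (blast intro: LIMSEQ_offset)
  qed
  then show ?thesis using subseq_diagseq by blast
qed

lemma closed_subspace_convergent_functionals:
  fixes x :: "nat \<Rightarrow> 'a::real_normed_vector"
  assumes "bounded (range x)"
  defines "Z \<equiv> {g::'a \<Rightarrow>\<^sub>L real. convergent (\<lambda>n. blinfun_apply g (x n))}"
  shows "subspace Z" and "closed Z"
proof -
  show "subspace Z"
    unfolding subspace_def Z_def
    by (auto simp: plus_blinfun.rep_eq scaleR_blinfun.rep_eq convergent_add convergent_mult_const_iff
        intro!: convergent_const convergent_mult)
  obtain B where B: "B > 0" "\<And>n. norm (x n) \<le> B" using assms unfolding bounded_pos by auto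
  have close: "\<bar>blinfun_apply g (x n) - blinfun_apply h (x n)\<bar> \<le> dist g h * B" for g h n
  proof -
    have "\<bar>blinfun_apply g (x n) - blinfun_apply h (x n)\<bar> = \<bar>blinfun_apply (g - h) (x n)\<bar>"
      by (simp add: minus_blinfun.rep_eq)
    also have "\<dots> \<le> norm (g - h) * norm (x n)" using norm_blinfun[of "g - h" "x n"] by simp
    also have "\<dots> \<le> dist g h * B" using B by (simp add: dist_norm mult_left_mono)
    finally show ?thesis .
  qed
  have "g \<in> Z" if approx: "\<forall>\<epsilon>>0. \<exists>h\<in>Z. dist h g < \<epsilon>" for g
  proof -
    have "Cauchy (\<lambda>n. blinfun_apply g (x n))"
    proof (rule metric_CauchyI)
      fix \<epsilon> :: real assume \<epsilon>: "\<epsilon> > 0"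
      then have "\<epsilon> / (3 * B) > 0" using B by simp
      then obtain h where h: "h \<in> Z" "dist h g < \<epsilon> / (3 * B)" using approx by blast
      then obtain N where N: "\<And>m n. m \<ge> N \<Longrightarrow> n \<ge> N \<Longrightarrow>
          dist (blinfun_apply h (x m)) (blinfun_apply h (x n)) < \<epsilon> / 3"
        using metric_CauchyD[of "\<lambda>n. blinfun_apply h (x n)" "\<epsilon> / 3"] \<epsilon>
        unfolding Z_def by (auto simp: convergent_Cauchy)
      have gh: "\<bar>blinfun_apply g (x n) - blinfun_apply h (x n)\<bar> < \<epsilon> / 3" for n
      proof -
        have "dist g h * B < \<epsilon> / (3 * B) * B"
          using h B by (intro mult_strict_right_mono) (simp_all add: dist_commute)
        then show ?thesis using close[where g=g and h=h and n=n] B by simp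
      qed
      show "\<exists>N. \<forall>m\<ge>N. \<forall>n\<ge>N. dist (blinfun_apply g (x m)) (blinfun_apply g (x n)) < \<epsilon>"
      proof (intro exI allI impI)
        fix m n assume "N \<le> m" "N \<le> n"
        from N[OF this] gh[of m] gh[of n]
        show "dist (blinfun_apply g (x m)) (blinfun_apply g (x n)) < \<epsilon>"
          unfolding dist_real_def by linarith
      qed
    qed
    then show ?thesis unfolding Z_def by (simp add: Cauchy_convergent_iff)
  qed
  then have "closure Z \<subseteq> Z" by (auto simp: closure_approachable)
  then show "closed Z" by (simp add: closure_subset_eq)
qed

lemma norming_functionals_of_dense_sequence_total:
  fixes e :: "nat \<Rightarrow> 'a::real_normed_vector" and f :: "nat \<Rightarrow> ('a \<Rightarrow>\<^sub>L real)"
  assumes dense: "closure (range e) = UNIV"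
    and norming: "\<And>k. norm (f k) \<le> 1" "\<And>k. blinfun_apply (f k) (e k) = norm (e k)"
    and vanish: "\<And>k. blinfun_apply (f k) w = 0"
  shows "w = 0"
proof -
  have small: "norm w \<le> 2 * \<epsilon>" if "\<epsilon> > 0" for \<epsilon>
  proof -
    have "w \<in> closure (range e)" using dense by simp
    then obtain k where k: "dist (e k) w < \<epsilon>"
      using \<open>\<epsilon> > 0\<close> unfolding closure_approachable by blast
    have "norm (e k) = blinfun_apply (f k) (e k - w)"
      using norming vanish by (simp add: blinfun.diff_right)
    also have "\<dots> \<le> norm (f k) * norm (e k - w)" using norm_blinfun[of "f k" "e k - w"] by simp
    also have "\<dots> \<le> norm (e k - w)" using norming(1)[of k] by (simp add: mult_left_le_one_le)
    finally have "norm (e k) < \<epsilon>" using k by (simp add: dist_norm)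
    then show ?thesis
      using k norm_triangle_ineq[of "e k" "w - e k"] by (simp add: dist_norm norm_minus_commute)
  qed
  have "norm w \<le> 0 + \<epsilon>" if "\<epsilon> > 0" for \<epsilon> using small[of "\<epsilon> / 2"] that by simp
  then have "norm w \<le> 0" by (rule field_le_epsilon)
  then show "w = 0" by simp
qed

lemma reflexive_total_closed_subspace_dual_eq_UNIV:
  fixes Z :: "('a::real_normed_vector \<Rightarrow>\<^sub>L real) set"
  assumes refl: "reflexive_space TYPE('a)" and Z: "subspace Z" "closed Z"
    and total: "\<And>w. (\<forall>g\<in>Z. blinfun_apply g w = 0) \<Longrightarrow> w = 0"
  shows "Z = UNIV"
proof (rule ccontr)
  assume "Z \<noteq> UNIV"
  then obtain g where "g \<notin> Z" by blast
  then have "infdist g Z > 0" using infdist_pos_not_in_closed[OF Z(2)] Z(1) subspace_0 by blast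
  then obtain \<Phi> :: "('a \<Rightarrow>\<^sub>L real) \<Rightarrow>\<^sub>L real"
    where \<Phi>: "\<forall>h\<in>Z. \<Phi> h = 0" "\<Phi> g \<noteq> 0"
    using exists_functional_infdist_subspace[OF Z(1), of g] by force
  obtain w where w: "\<And>h. \<Phi> h = blinfun_apply h w" using refl unfolding reflexive_space_def by blast
  then have "w = 0" using \<Phi>(1) total by simp
  then show False using \<Phi>(2) w by simp
qed

lemma weakly_convergent_if_functionals_convergent:
  fixes x :: "nat \<Rightarrow> 'a::real_normed_vector"
  assumes refl: "reflexive_space TYPE('a)" and bd: "bounded (range x)"
    and conv: "\<And>g::'a \<Rightarrow>\<^sub>L real. convergent (\<lambda>n. blinfun_apply g (x n))"
  shows "\<exists>ub. weakly_converges_to x ub"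
proof -
  obtain B where B: "\<And>n. norm (x n) \<le> B" using bd unfolding bounded_iff by auto
  define L where "L g = lim (\<lambda>n. blinfun_apply g (x n))" for g :: "'a \<Rightarrow>\<^sub>L real"
  have L: "(\<lambda>n. blinfun_apply g (x n)) \<longlonglongrightarrow> L g" for g
    using conv unfolding L_def by (simp add: convergent_LIMSEQ_iff)
  have "bounded_linear L"
  proof (rule bounded_linear_intro[where K=B])
    fix g h show "L (g + h) = L g + L h"
      using tendsto_add[OF L[of g] L[of h]] L[of "g + h"] by (simp add: plus_blinfun.rep_eq LIMSEQ_unique)
  next
    fix c :: real and g show "L (c *\<^sub>R g) = c *\<^sub>R L g"
      using tendsto_mult[OF tendsto_const[of c] L[of g]] L[of "c *\<^sub>R g"]
      by (simp add: scaleR_blinfun.rep_eq LIMSEQ_unique)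
  next
    fix g
    have "\<bar>blinfun_apply g (x n)\<bar> \<le> norm g * B" for n
      using norm_blinfun[of g "x n"] B[of n] by (simp add: order_trans mult_left_mono)
    then show "norm (L g) \<le> norm g * B"
      using Lim_bounded[OF tendsto_rabs[OF L[of g]], of 0] by auto
  qed
  moreover obtain ub where "\<And>g. blinfun_apply (Blinfun L) g = blinfun_apply g ub"
    using refl unfolding reflexive_space_def by blast
  ultimately have "L g = blinfun_apply g ub" for g by (simp add: bounded_linear_Blinfun_apply)
  then have "weakly_converges_to x ub" using L unfolding weakly_converges_to_def by simp
  then show ?thesis by blast
qed

theorem bounded_imp_weakly_convergent_subseq:
  fixes x :: "nat \<Rightarrow> 'a::real_normed_vector"
  assumes refl: "reflexive_space TYPE('a)" and sep: "separable_type TYPE('a)"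
    and bd: "bounded (range x)"
  shows "\<exists>r ub. strict_mono r \<and> weakly_converges_to (x \<circ> r) ub"
proof -
  obtain D :: "'a set" where D: "countable D" "closure D = UNIV"
    using sep unfolding separable_type_def by auto
  then have "D \<noteq> {}" by auto
  define e where "e = from_nat_into D"
  have e: "closure (range e) = UNIV" unfolding e_def using range_from_nat_into[OF \<open>D \<noteq> {}\<close> D(1)] D by simp
  have "\<forall>k. \<exists>g::'a \<Rightarrow>\<^sub>L real. norm g \<le> 1 \<and> blinfun_apply g (e k) = norm (e k)"
    using exists_norming_functional by blast
  then obtain f :: "nat \<Rightarrow> ('a \<Rightarrow>\<^sub>L real)"
    where "\<forall>k. norm (f k) \<le> 1 \<and> blinfun_apply (f k) (e k) = norm (e k)"
    unfolding choice_iff by blast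
  then have f: "\<And>k. norm (f k) \<le> 1" "\<And>k. blinfun_apply (f k) (e k) = norm (e k)" by auto
  obtain r where r: "strict_mono r" "\<And>k. convergent (\<lambda>n. blinfun_apply (f k) (x (r n)))"
    using bounded_imp_subseq_convergent_functionals[OF bd] by blast
  define Z where "Z = {g::'a \<Rightarrow>\<^sub>L real. convergent (\<lambda>n. blinfun_apply g ((x \<circ> r) n))}"
  have bd_r: "bounded (range (x \<circ> r))" by (rule bounded_subset[OF bd]) auto
  have "Z = UNIV"
  proof (rule reflexive_total_closed_subspace_dual_eq_UNIV[OF refl])
    show "subspace Z" "closed Z"
      unfolding Z_def using closed_subspace_convergent_functionals[OF bd_r] by simp_all
    show "w = 0" if "\<forall>g\<in>Z. blinfun_apply g w = 0" for w
      using norming_functionals_of_dense_sequence_total[OF e f] that r(2) unfolding Z_def by auto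
  qed
  then obtain ub where "weakly_converges_to (x \<circ> r) ub"
    using weakly_convergent_if_functionals_convergent[OF refl bd_r] unfolding Z_def by blast
  then show ?thesis using r(1) by blast
qed

section \<open>Quasi-optimality of weak limits of minimizing sequences\<close>

lemma norm_le_of_weakly_converges_to:
  fixes X :: "nat \<Rightarrow> 'a::real_normed_vector"
  assumes weak: "weakly_converges_to X x" and le: "\<And>n. norm (y - X n) \<le> b n" and b: "b \<longlonglongrightarrow> l"
  shows "norm (y - x) \<le> l"
proof -
  obtain f :: "'a \<Rightarrow>\<^sub>L real" where f: "norm f \<le> 1" "blinfun_apply f (y - x) = norm (y - x)"
    using exists_norming_functional by blast
  have "(\<lambda>n. blinfun_apply f y - blinfun_apply f (X n)) \<longlonglongrightarrow> blinfun_apply f y - blinfun_apply f x"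
    using weak unfolding weakly_converges_to_def by (intro tendsto_diff tendsto_const) blast
  then have "(\<lambda>n. blinfun_apply f (y - X n)) \<longlonglongrightarrow> norm (y - x)"
    using f(2) by (simp add: blinfun.diff_right)
  moreover have "blinfun_apply f (y - X n) \<le> b n" for n
  proof -
    have "blinfun_apply f (y - X n) \<le> norm f * norm (y - X n)"
      using norm_blinfun[of f "y - X n"] by simp
    also have "\<dots> \<le> norm (y - X n)" using f(1) by (simp add: mult_left_le_one_le)
    finally show ?thesis using le[of n] by simp
  qed
  ultimately show ?thesis using LIMSEQ_le[OF _ b] by blast
qed

lemma infsup_const_le_bound:
  fixes R :: "'v::real_normed_vector \<Rightarrow> ('w::real_normed_vector \<Rightarrow>\<^sub>L real)" and v0 :: 'v
  assumes infsup: "\<alpha> \<le> Sup {blinfun_apply (R v) w / (norm w * norm v) | v. v \<noteq> 0}"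
    and R_bound: "\<And>v. norm (R v) \<le> Mstar * norm v"
    and "w \<noteq> 0" "v0 \<noteq> 0"
  shows "\<alpha> \<le> Mstar"
proof -
  define S where "S = {blinfun_apply (R v) w / (norm w * norm v) | v. v \<noteq> 0}"
  have "S \<noteq> {}" using \<open>v0 \<noteq> 0\<close> unfolding S_def by blast
  moreover have "t \<le> Mstar" if t: "t \<in> S" for t
  proof -
    obtain v where v: "v \<noteq> 0" "t = blinfun_apply (R v) w / (norm w * norm v)"
      using t unfolding S_def by blast
    have "blinfun_apply (R v) w \<le> norm (R v) * norm w"
      using abs_ge_self norm_blinfun[of "R v" w] unfolding real_norm_def by (rule order_trans)
    also have "\<dots> \<le> Mstar * norm v * norm w" by (rule mult_right_mono[OF R_bound norm_ge_zero])
    also have "\<dots> = Mstar * (norm w * norm v)" by (simp only: mult_ac)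
    finally have le: "blinfun_apply (R v) w \<le> Mstar * (norm w * norm v)" .
    have "norm w * norm v > 0" using v(1) \<open>w \<noteq> 0\<close> by simp
    show ?thesis unfolding v(2) pos_divide_le_eq[OF \<open>norm w * norm v > 0\<close>] by (rule le)
  qed
  ultimately have "Sup S \<le> Mstar" by (rule cSup_least)
  with infsup show ?thesis unfolding S_def by linarith
qed

lemma le_mult_INF:
  fixes f :: "'a \<Rightarrow> real"
  assumes "S \<noteq> {}" "K > 0" "\<And>s. s \<in> S \<Longrightarrow> x \<le> K * f s"
  shows "x \<le> K * (INF s\<in>S. f s)"
proof -
  have "x / K \<le> (INF s\<in>S. f s)"
    using assms by (intro cINF_greatest) (auto simp: divide_le_eq mult.commute)
  then show ?thesis using assms(2) by (simp add: divide_le_eq mult.commute)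
qed

locale bounded_form_eta =
  fixes A :: "'w::real_normed_vector \<Rightarrow> 'v::real_normed_vector \<Rightarrow> real"
    and M :: real and Veta :: "'v set"
  assumes bilinear: "bilinear A"
    and bounded: "A w v \<le> M * norm w * norm v"
    and Veta_nonzero: "\<exists>v\<in>Veta. norm v \<noteq> 0"
begin

abbreviation op_norm :: "'w \<Rightarrow> real" where
  "op_norm \<equiv> op_norm_eta A Veta"

lemma quotient_le_bound: "norm v \<noteq> 0 \<Longrightarrow> A w v / norm v \<le> M * norm w"
  using bounded[of w v] by (simp add: divide_le_eq)

lemma op_norm_upper: "v \<in> Veta \<Longrightarrow> norm v \<noteq> 0 \<Longrightarrow> A w v / norm v \<le> op_norm w"
  unfolding op_norm_eta_def
  by (rule cSup_upper) (auto intro!: bdd_aboveI[where M="M * norm w"] quotient_le_bound)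

lemma op_norm_le: "op_norm w \<le> M * norm w"
  unfolding op_norm_eta_def using Veta_nonzero by (intro cSup_least) (auto intro: quotient_le_bound)

lemma op_norm_add: "op_norm (w1 + w2) \<le> op_norm w1 + op_norm w2"
  unfolding op_norm_eta_def[of A Veta "w1 + w2"] using Veta_nonzero
  by (intro cSup_least)
     (auto simp: bilinear_ladd[OF bilinear] add_divide_distrib intro!: add_mono op_norm_upper)

lemma bound_nonneg:
  fixes w :: 'w
  assumes "w \<noteq> 0"
  shows "M \<ge> 0"
proof -
  obtain v :: 'v where "norm v \<noteq> 0" using Veta_nonzero by blast
  with assms have pos: "2 * (norm w * norm v) > 0" by simp
  have "0 = A w v + A (- w) v" by (simp add: bilinear_lneg[OF bilinear])
  also have "\<dots> \<le> M * (2 * (norm w * norm v))"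
    using bounded[of w v] bounded[of "- w" v] by (simp add: algebra_simps)
  finally show ?thesis using pos by (metis not_le mult_neg_pos)
qed

end

locale quasi_optimality = bounded_form_eta A M Veta
  for A :: "'w::real_normed_vector \<Rightarrow> 'v::real_normed_vector \<Rightarrow> real" and M Veta +
  fixes Wt :: "'w set" and \<kappa> c C :: real and J :: "'w \<Rightarrow> real" and u :: 'w
  assumes kappa_pos: "\<kappa> > 0"
    and discrete_infsup: "w \<in> diff_set Wt \<Longrightarrow> \<kappa> * norm w \<le> op_norm w"
    and c_pos: "c > 0"
    and c_le_C: "c \<le> C"
    and J_lower: "c * op_norm w \<le> J w" and J_upper: "J w \<le> C * op_norm w"
begin

lemma distance_le_J:
  assumes "w0 \<in> Wt" "w \<in> Wt"
  shows "\<kappa> * norm (w0 - w) \<le> J (u - w) / c + M * norm (u - w0)"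
proof -
  have "\<kappa> * norm (w0 - w) \<le> op_norm ((u - w) + (w0 - u))"
    using discrete_infsup assms unfolding diff_set_def by fastforce
  also have "\<dots> \<le> op_norm (u - w) + op_norm (w0 - u)" by (rule op_norm_add)
  also have "op_norm (u - w) \<le> J (u - w) / c"
    using J_lower c_pos by (simp add: pos_le_divide_eq mult.commute)
  also have "op_norm (w0 - u) \<le> M * norm (u - w0)"
    using op_norm_le[of "w0 - u"] by (simp add: norm_minus_commute)
  finally show ?thesis by simp
qed

lemma bdd_below_J:
  assumes "w0 \<in> Wt"
  shows "bdd_below ((\<lambda>w. J (u - w)) ` Wt)"
proof (rule bdd_belowI2)
  fix w assume "w \<in> Wt"
  have "0 \<le> \<kappa> * norm (w0 - w)" using kappa_pos by simp
  also have "\<dots> \<le> J (u - w) / c + M * norm (u - w0)" using distance_le_J assms \<open>w \<in> Wt\<close> .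
  finally show "- c * M * norm (u - w0) \<le> J (u - w)"
    using c_pos by (simp add: field_simps)
qed

lemma minimizing_sequence_bounded:
  assumes "\<And>n. wt n \<in> Wt" and "convergent (\<lambda>n. J (u - wt n))"
  shows "bounded (range wt)"
proof -
  obtain K where K: "\<And>n. norm (J (u - wt n)) \<le> K"
    using convergent_imp_Bseq[OF assms(2)] unfolding Bseq_def by blast
  have "norm (wt n) \<le> norm (wt 0) + (K / c + M * norm (u - wt 0)) / \<kappa>" for n
  proof -
    have "J (u - wt n) / c \<le> K / c"
      using K[of n] c_pos by (intro divide_right_mono) auto
    then have "\<kappa> * norm (wt 0 - wt n) \<le> K / c + M * norm (u - wt 0)"
      using distance_le_J[OF assms(1) assms(1), of 0 n] by linarith
    then have "norm (wt 0 - wt n) \<le> (K / c + M * norm (u - wt 0)) / \<kappa>"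
      using kappa_pos by (simp add: pos_le_divide_eq mult.commute)
    then show ?thesis using norm_triangle_sub[of "wt n" "wt 0"] by (simp add: norm_minus_commute)
  qed
  then show ?thesis unfolding bounded_iff by blast
qed

lemma weak_limit_error:
  assumes wt: "\<And>n. wt n \<in> Wt"
    and minimizing: "(\<lambda>n. J (u - wt n)) \<longlonglongrightarrow> (INF w\<in>Wt. J (u - w))"
    and weak: "weakly_converges_to wt ub"
    and w0: "w0 \<in> Wt"
  shows "norm (u - ub) \<le> (1 + (C / c + 1) * M / \<kappa>) * norm (u - w0)"
proof -
  have "(INF w\<in>Wt. J (u - w)) \<le> J (u - w0)" using bdd_below_J[OF w0] w0 by (rule cINF_lower)
  also have "\<dots> \<le> C * op_norm (u - w0)" by (rule J_upper)
  also have "\<dots> \<le> C * (M * norm (u - w0))"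
    using c_pos c_le_C by (intro mult_left_mono op_norm_le) simp
  finally have inf_le: "(INF w\<in>Wt. J (u - w)) \<le> C * (M * norm (u - w0))" .
  have lim_le: "((INF w\<in>Wt. J (u - w)) / c + M * norm (u - w0)) / \<kappa>
      \<le> (C / c + 1) * M / \<kappa> * norm (u - w0)"
  proof -
    have "((INF w\<in>Wt. J (u - w)) / c + M * norm (u - w0)) / \<kappa>
        \<le> (C * (M * norm (u - w0)) / c + M * norm (u - w0)) / \<kappa>"
      using c_pos kappa_pos by (intro divide_right_mono add_right_mono inf_le) simp_all
    also have "\<dots> = (C / c + 1) * M / \<kappa> * norm (u - w0)"
      using c_pos kappa_pos by (simp add: field_simps)
    finally show ?thesis .
  qed
  define b where "b n = (J (u - wt n) / c + M * norm (u - w0)) / \<kappa>" for n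
  have "norm (w0 - wt n) \<le> b n" for n
    using distance_le_J[OF w0 wt] kappa_pos unfolding b_def by (simp add: pos_le_divide_eq mult.commute)
  moreover have "b \<longlonglongrightarrow> ((INF w\<in>Wt. J (u - w)) / c + M * norm (u - w0)) / \<kappa>"
    unfolding b_def using c_pos kappa_pos by (intro tendsto_intros minimizing) simp_all
  ultimately have "norm (w0 - ub) \<le> (C / c + 1) * M / \<kappa> * norm (u - w0)"
    using weak lim_le by (metis norm_le_of_weakly_converges_to order_trans)
  then show ?thesis
    using norm_triangle_ineq[of "u - w0" "w0 - ub"] by (simp add: algebra_simps)
qed


lemma weak_limit_quasi_optimal:
  assumes wt: "\<And>n. wt n \<in> Wt"
    and minimizing: "(\<lambda>n. J (u - wt n)) \<longlonglongrightarrow> (INF w\<in>Wt. J (u - w))"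
    and weak: "weakly_converges_to wt ub"
    and K: "\<And>w::'w. w \<noteq> 0 \<Longrightarrow> 1 + (C / c + 1) * M / \<kappa> \<le> K"
  shows "norm (u - ub) \<le> K * (INF w\<in>Wt. norm (u - w))"
proof (cases "\<exists>w::'w. w \<noteq> 0")
  case True
  then obtain w :: 'w where w: "w \<noteq> 0" by blast
  have "0 \<le> (C / c + 1) * M / \<kappa>"
    using c_pos c_le_C kappa_pos bound_nonneg[OF w] by simp
  then have "0 < K" using K[OF w] by linarith
  moreover have "norm (u - ub) \<le> K * norm (u - w0)" if "w0 \<in> Wt" for w0
  proof -
    have "norm (u - ub) \<le> (1 + (C / c + 1) * M / \<kappa>) * norm (u - w0)"
      by (rule weak_limit_error[OF wt minimizing weak that])
    also have "\<dots> \<le> K * norm (u - w0)" by (rule mult_right_mono[OF K[OF w] norm_ge_zero])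
    finally show ?thesis .
  qed
  moreover have "Wt \<noteq> {}" using wt by blast
  ultimately show ?thesis by (intro le_mult_INF)
next
  case False
  then have "x = 0" for x :: 'w by blast
  then have zero: "norm (u - w) = 0" for w by (metis norm_zero)
  have "Wt \<noteq> {}" using wt by blast
  then have "(\<lambda>w. norm (u - w)) ` Wt = {0}" by (simp only: zero image_constant_conv if_False)
  then show ?thesis by (simp only: zero cInf_singleton mult_zero_right order_refl)
qed

end

lemma quasi_optimality_constant_le:
  fixes c C M \<alpha> Mstar \<kappa> :: real
  assumes "0 < c" "c \<le> C" "0 \<le> M" "0 < \<alpha>" "\<alpha> \<le> Mstar" "0 < \<kappa>"
  shows "1 + (C / c + 1) * M / \<kappa> \<le> 1 + 2 * (C / c) * (Mstar / \<alpha>) * (M / \<kappa>)"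
proof -
  have "1 \<le> C / c" "1 \<le> Mstar / \<alpha>" using assms by simp_all
  then have "C / c + 1 \<le> 2 * (C / c) * (Mstar / \<alpha>)"
    using mult_left_mono[of 1 "Mstar / \<alpha>" "2 * (C / c)"] by simp
  then have "(C / c + 1) * (M / \<kappa>) \<le> 2 * (C / c) * (Mstar / \<alpha>) * (M / \<kappa>)"
    using assms by (intro mult_right_mono) simp_all
  then show ?thesis by simp
qed

theorem mainTheorem6:
  fixes A :: "'w::banach \<Rightarrow> 'v::banach \<Rightarrow> real"
    and F :: "'v \<Rightarrow> real"
    and u :: 'w
    and M :: real
    and Wt :: "'w set"
    and Veta :: "'v set"
    and R :: "'v \<Rightarrow> ('w \<Rightarrow>\<^sub>L real)"
    and \<alpha> Mstar \<kappa> :: real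
    and J :: "'w \<Rightarrow> real"
    and c C :: real
  assumes reflW: "reflexive_space TYPE('w)" and sepW: "separable_type TYPE('w)"
    and reflV: "reflexive_space TYPE('v)" and sepV: "separable_type TYPE('v)"
    and A_bilin: "bilinear A"
    and A_bound: "\<forall>w v. A w v \<le> M * norm w * norm v"
    and F_lin: "bounded_linear F"
    and u_sol: "\<forall>v. A u v = F v"
    and u_unique: "\<forall>w. (\<forall>v. A w v = F v) \<longrightarrow> w = u"
    and Veta_nz: "\<exists>v\<in>Veta. norm v \<noteq> 0"
    and R_lin: "linear R"
    and pos: "\<alpha> > 0" "Mstar > 0" "\<kappa> > 0"
    and infsup: "\<forall>w. w \<noteq> 0 \<longrightarrow>
        Sup {blinfun_apply (R v) w / (norm w * norm v) | v. v \<noteq> 0} \<ge> \<alpha>"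
    and R_bound: "\<forall>v. norm (R v) \<le> Mstar * norm v"
    and disc_infsup: "\<forall>w \<in> Wt \<union> diff_set Wt. \<kappa> * norm w \<le> op_norm_eta A Veta w"
    and cC: "0 < c" "c \<le> C"
    and J_equiv: "\<forall>w. c * op_norm_eta A Veta w \<le> J w \<and> J w \<le> C * op_norm_eta A Veta w"
  shows "(\<forall>(wt :: nat \<Rightarrow> 'w) ub.
            (\<forall>n. wt n \<in> Wt)
          \<and> (\<lambda>n. J (u - wt n)) \<longlonglongrightarrow> Inf ((\<lambda>w. J (u - w)) ` Wt)
          \<and> weakly_converges_to wt ub
          \<longrightarrow> norm (u - ub) \<le> (1 + 2 * (C / c) * (Mstar / \<alpha>) * (M / \<kappa>))
                                  * Inf ((\<lambda>w. norm (u - w)) ` Wt))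
       \<and> (\<forall>wt :: nat \<Rightarrow> 'w.
            (\<forall>n. wt n \<in> Wt)
          \<and> (\<lambda>n. J (u - wt n)) \<longlonglongrightarrow> Inf ((\<lambda>w. J (u - w)) ` Wt)
          \<longrightarrow> bounded (range wt)
            \<and> (\<exists>r ub. strict_mono r \<and> weakly_converges_to (wt \<circ> r) ub))"
proof -
  interpret quasi_optimality A M Veta Wt \<kappa> c C J u
    using A_bilin A_bound Veta_nz pos(3) disc_infsup cC J_equiv by unfold_locales auto
  have constant_le: "1 + (C / c + 1) * M / \<kappa> \<le> 1 + 2 * (C / c) * (Mstar / \<alpha>) * (M / \<kappa>)"
    if "w \<noteq> 0" for w :: 'w
  proof -
    obtain v0 :: 'v where "norm v0 \<noteq> 0" using Veta_nz by blast
    then have "\<alpha> \<le> Mstar"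
      using infsup[rule_format, OF that] R_bound[rule_format] that
      by (intro infsup_const_le_bound[of \<alpha> R w Mstar v0]) simp_all
    then show ?thesis using cC bound_nonneg[OF that] pos by (intro quasi_optimality_constant_le)
  qed
  show ?thesis
  proof (intro conjI allI impI; elim conjE)
    fix wt ub
    assume "\<forall>n. wt n \<in> Wt" "(\<lambda>n. J (u - wt n)) \<longlonglongrightarrow> (INF w\<in>Wt. J (u - w))"
      and "weakly_converges_to wt ub"
    then show "norm (u - ub) \<le> (1 + 2 * (C / c) * (Mstar / \<alpha>) * (M / \<kappa>)) * (INF w\<in>Wt. norm (u - w))"
      using constant_le by (intro weak_limit_quasi_optimal) auto
  next
    fix wt
    assume "\<forall>n. wt n \<in> Wt" "(\<lambda>n. J (u - wt n)) \<longlonglongrightarrow> (INF w\<in>Wt. J (u - w))"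
    then show "bounded (range wt)"
      using minimizing_sequence_bounded convergentI by blast
    then show "\<exists>r ub. strict_mono r \<and> weakly_converges_to (wt \<circ> r) ub"
      by (rule bounded_imp_weakly_convergent_subseq[OF reflW sepW])
  qed
qed

end
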